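(* Let $n\ge1$, $\mathfrak g=sl(n+1,\mathbb C)$, $M=\mathbb C[p_1,\dots,p_n,q_1,\dots,q_n]$ with Lie bracket $[\cdot,\cdot]_\ast$, and let $\Phi_0:\mathfrak g\to M$, $\Phi_0(X)=\tilde X$. For every $a\in\mathbb C$, the map $\Phi_a:\mathfrak g\to M[[t]]$, $\Phi_a(X)=\tilde X+ta\varphi_1(X)$, is a formal deformation of $\Phi_0$, i.e. $\Phi_a([X,Y])=[\Phi_a(X),\Phi_a(Y)]_\ast$ for all $X,Y\in\mathfrak g$ (the bracket being extended $\mathbb C[[t]]$-bilinearly to formal series).
   Context: $E_{ij}$ denotes the $(n+1)\times(n+1)$ matrix with $1$ in entry $(i,j)$ and $0$ elsewhere. Let $\Psi(p,q)$ be the $(n+1)\times(n+1)$ matrix whose first row is $(-\sum_j p_jq_j,\ q_1,\dots,q_n)$ and whose $(k+1)$-th row ($1\le k\le n$) is $p_k$ times the first row. For $X\in\mathfrak g$, $\tilde X(p,q)=\operatorname{Tr}(\Psi(p,q)X)$. Write $x=(p_1,\dots,p_n,q_1,\dots,q_n)$, let $\Lambda^{k,n+k}=1$, $\Lambda^{n+k,k}=-1$ ($1\le k\le n$), $\Lambda^{ij}=0$ otherwise, $P^l(u,v)=\sum\Lambda^{i_1j_1}\cdots\Lambda^{i_lj_l}\partial^l_{x_{i_1}\cdots x_{i_l}}u\,\partial^l_{x_{j_1}\cdots x_{j_l}}v$, and $[u,v]_\ast=\sum_{l\ge0}\frac{(-1/4)^l}{(2l+1)!}P^{2l+1}(u,v)$.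 The linear map $\varphi_1:\mathfrak g\to M$ is determined by $\varphi_1(E_{11}-E_{22})=1$, $\varphi_1(E_{kk}-E_{k+1,k+1})=0$ for $k=2,\dots,n$, $\varphi_1(E_{1,k+1})=p_k$ for $k=1,\dots,n$, and $\varphi_1(E_{ij})=0$ for $i\ge2$, $j\ne i$. *)

theory Defs
  imports Complex_Main "HOL-Library.Poly_Mapping" "HOL-Library.Groups_Big_Fun"
    "HOL-Computational_Algebra.Formal_Power_Series"
begin

text \<open>M = C[x_1,...,x_{2n}] with x_k = p_k, x_{n+k} = q_k (1 <= k <= n).
  Polynomials are finitely supported maps from monomials (exponent vectors
  nat =>0 nat) to coefficients.\<close>

type_synonym mpoly = "(nat \<Rightarrow>\<^sub>0 nat) \<Rightarrow>\<^sub>0 complex"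

definition mconst :: "complex \<Rightarrow> mpoly" where
  "mconst c = Poly_Mapping.single 0 c"

definition mvar :: "nat \<Rightarrow> mpoly" where
  "mvar i = Poly_Mapping.single (Poly_Mapping.single i 1) 1"

definition pvar :: "nat \<Rightarrow> mpoly" where "pvar k = mvar k"
definition qvar :: "nat \<Rightarrow> nat \<Rightarrow> mpoly" where "qvar n k = mvar (n + k)"

definition pderiv_m :: "nat \<Rightarrow> mpoly \<Rightarrow> mpoly" where
  "pderiv_m i u = sum (\<lambda>m. Poly_Mapping.single (m - Poly_Mapping.single i 1)
        (of_nat (Poly_Mapping.lookup m i) * Poly_Mapping.lookup u m)) (Poly_Mapping.keys u)"

definition pderivs :: "nat list \<Rightarrow> mpoly \<Rightarrow> mpoly" where
  "pderivs is u = foldr pderiv_m is u"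

definition Lam :: "nat \<Rightarrow> nat \<Rightarrow> nat \<Rightarrow> complex" where
  "Lam n i j = (if 1 \<le> i \<and> i \<le> n \<and> j = n + i then 1
                else if 1 \<le> j \<and> j \<le> n \<and> i = n + j then -1 else 0)"

definition idx_lists :: "nat \<Rightarrow> nat \<Rightarrow> nat list set" where
  "idx_lists n l = {is. length is = l \<and> set is \<subseteq> {1..2*n}}"

definition Pl :: "nat \<Rightarrow> nat \<Rightarrow> mpoly \<Rightarrow> mpoly \<Rightarrow> mpoly" where
  "Pl n l u v = (\<Sum>is\<in>idx_lists n l. \<Sum>js\<in>idx_lists n l.
      mconst (\<Prod>k<l. Lam n (is ! k) (js ! k)) * pderivs is u * pderivs js v)"

text \<open>Moyal-type bracket; the sum over l is a finitely supported sum.\<close>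
definition star_bracket :: "nat \<Rightarrow> mpoly \<Rightarrow> mpoly \<Rightarrow> mpoly" where
  "star_bracket n u v = Sum_any (\<lambda>l::nat.
      mconst ((-1/4) ^ l / of_nat (fact (2*l+1))) * Pl n (2*l+1) u v)"

definition star_bracket_fps :: "nat \<Rightarrow> mpoly fps \<Rightarrow> mpoly fps \<Rightarrow> mpoly fps" where
  "star_bracket_fps n F G = Abs_fps (\<lambda>k. \<Sum>i\<le>k. star_bracket n (fps_nth F i) (fps_nth G (k - i)))"

text \<open>(n+1)x(n+1) complex matrices as functions, indices 1..n+1, zero outside.\<close>
type_synonym cmat = "nat \<Rightarrow> nat \<Rightarrow> complex"

definition sl :: "nat \<Rightarrow> cmat set" where
  "sl n = {X. (\<forall>i j. \<not> (i \<in> {1..n+1} \<and> j \<in> {1..n+1}) \<longrightarrow> X i j = 0)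
              \<and> (\<Sum>i=1..n+1. X i i) = 0}"

definition mat_mult :: "nat \<Rightarrow> cmat \<Rightarrow> cmat \<Rightarrow> cmat" where
  "mat_mult n X Y = (\<lambda>i j. \<Sum>k=1..n+1. X i k * Y k j)"

definition commutator :: "nat \<Rightarrow> cmat \<Rightarrow> cmat \<Rightarrow> cmat" where
  "commutator n X Y = (\<lambda>i j. mat_mult n X Y i j - mat_mult n Y X i j)"

definition Emat :: "nat \<Rightarrow> nat \<Rightarrow> cmat" where
  "Emat i j = (\<lambda>a b. if a = i \<and> b = j then 1 else 0)"

definition Psi_row1 :: "nat \<Rightarrow> nat \<Rightarrow> mpoly" where
  "Psi_row1 n j = (if j = 1 then - (\<Sum>k=1..n. pvar k * qvar n k) else qvar n (j - 1))"

definition Psi :: "nat \<Rightarrow> nat \<Rightarrow> nat \<Rightarrow> mpoly" where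
  "Psi n i j = (if i = 1 then Psi_row1 n j else pvar (i - 1) * Psi_row1 n j)"

definition tilde :: "nat \<Rightarrow> cmat \<Rightarrow> mpoly" where
  "tilde n X = (\<Sum>i=1..n+1. \<Sum>j=1..n+1. Psi n i j * mconst (X j i))"

definition Phi :: "nat \<Rightarrow> (cmat \<Rightarrow> mpoly) \<Rightarrow> complex \<Rightarrow> cmat \<Rightarrow> mpoly fps" where
  "Phi n \<phi> a X = fps_const (tilde n X) + fps_X * fps_const (mconst a * \<phi> X)"

end

theory Submission
  imports Defs
begin

text \<open>Both \<open>tilde X\<close> and \<open>\<phi>\<^sub>1(X)\<close> have degree at most one in the \<open>q\<close>-variables, while a
  nonzero term of \<open>P\<^sup>l\<close> differentiates \<open>l\<close> times with respect to \<open>q\<close>-variables in total, because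
  \<open>\<Lambda>\<close> pairs every \<open>p\<close>-index with a \<open>q\<close>-index. Hence on such polynomials \<open>[\<cdot>,\<cdot>]\<^sub>\<ast>\<close> is the
  Poisson bracket \<open>{\<cdot>,\<cdot>} = P\<^sup>1\<close>, an antisymmetric biderivation. The matrix \<open>\<Psi>\<close> is the outer
  product of the column \<open>V = (1, p\<^sub>1, \<dots>, p\<^sub>n)\<close> (\<open>pcol\<close>) and the row
  \<open>W = (-\<Sigma>\<^sub>k p\<^sub>k q\<^sub>k, q\<^sub>1, \<dots>, q\<^sub>n)\<close> (\<open>qrow\<close>), and
  \<open>{V\<^sub>a, V\<^sub>b} = 0\<close>, \<open>{V\<^sub>a, W\<^sub>b} = \<delta>\<^sub>a\<^sub>b - \<delta>\<^sub>b\<^sub>1 V\<^sub>a\<close>, \<open>{W\<^sub>a, W\<^sub>b} = \<delta>\<^sub>b\<^sub>1 W\<^sub>a - \<delta>\<^sub>a\<^sub>1 W\<^sub>b\<close>.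
  So \<open>X \<mapsto> tilde X = \<Sigma> X\<^sub>j\<^sub>i W\<^sub>j V\<^sub>i\<close> is a Lie algebra morphism. Linearity and the normalisations
  force \<open>\<phi>\<^sub>1(X) = \<Sigma>\<^sub>b X\<^sub>1\<^sub>b V\<^sub>b\<close>, which is a 1-cocycle for \<open>tilde\<close> and Poisson-commutes with itself.
  These three identities are the coefficients of \<open>t\<^sup>0\<close>, \<open>t\<^sup>1\<close> and \<open>t\<^sup>2\<close> of the claim.\<close>

section \<open>Partial derivatives\<close>

abbreviation var_exp :: "nat \<Rightarrow> nat \<Rightarrow>\<^sub>0 nat" where
  "var_exp i \<equiv> Poly_Mapping.single i 1"

definition pderiv_term :: "nat \<Rightarrow> mpoly \<Rightarrow> (nat \<Rightarrow>\<^sub>0 nat) \<Rightarrow> mpoly" where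
  "pderiv_term i u m = Poly_Mapping.single (m - var_exp i)
     (of_nat (Poly_Mapping.lookup m i) * Poly_Mapping.lookup u m)"

lemma pderiv_m_eq_sum_superset:
  assumes "finite K" "Poly_Mapping.keys u \<subseteq> K"
  shows "pderiv_m i u = (\<Sum>m\<in>K. pderiv_term i u m)"
  unfolding pderiv_m_def pderiv_term_def
  by (rule sum.mono_neutral_left) (use assms in \<open>auto simp: in_keys_iff\<close>)

lemma pderiv_m_add: "pderiv_m i (u + v) = pderiv_m i u + pderiv_m i v"
proof -
  let ?K = "Poly_Mapping.keys u \<union> Poly_Mapping.keys v"
  have "pderiv_m i (u + v) = (\<Sum>m\<in>?K. pderiv_term i (u + v) m)"
    using keys_add[of u v] by (intro pderiv_m_eq_sum_superset) auto
  also have "\<dots> = (\<Sum>m\<in>?K. pderiv_term i u m) + (\<Sum>m\<in>?K. pderiv_term i v m)"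
    by (simp add: pderiv_term_def lookup_add distrib_left single_add sum.distrib)
  also have "\<dots> = pderiv_m i u + pderiv_m i v"
    using pderiv_m_eq_sum_superset[of ?K u i] pderiv_m_eq_sum_superset[of ?K v i] by simp
  finally show ?thesis .
qed

lemma pderiv_m_zero [simp]: "pderiv_m i 0 = 0"
  by (simp add: pderiv_m_def)

lemma pderiv_m_sum: "pderiv_m i (sum g S) = (\<Sum>s\<in>S. pderiv_m i (g s))"
  by (induction S rule: infinite_finite_induct) (auto simp: pderiv_m_add)

lemma pderiv_m_uminus: "pderiv_m i (- u) = - pderiv_m i u"
  using pderiv_m_add[of i u "-u"] by (simp add: eq_neg_iff_add_eq_0 add.commute)

lemma pderiv_m_single:
  "pderiv_m i (Poly_Mapping.single m c) =
     Poly_Mapping.single (m - var_exp i) (of_nat (Poly_Mapping.lookup m i) * c)"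
  by (simp add: pderiv_m_def)

lemma poly_mapping_sum_single:
  "u = (\<Sum>m\<in>Poly_Mapping.keys u. Poly_Mapping.single m (Poly_Mapping.lookup u m))"
  by (rule poly_mapping_eqI)
    (auto simp: lookup_sum lookup_single when_def in_keys_iff sum.delta' split: if_splits)

lemma diff_var_exp_add:
  assumes "Poly_Mapping.lookup a i > 0"
  shows "a - var_exp i + b = a + b - var_exp i"
  by (rule poly_mapping_eqI) (use assms in \<open>auto simp: lookup_add lookup_minus lookup_single when_def\<close>)

lemma pderiv_m_mult_single:
  "pderiv_m i (Poly_Mapping.single a x * Poly_Mapping.single b y) =
     pderiv_m i (Poly_Mapping.single a x) * Poly_Mapping.single b y
     + Poly_Mapping.single a x * pderiv_m i (Poly_Mapping.single b y)"
proof -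
  have left: "Poly_Mapping.single (a - var_exp i + b) (of_nat (Poly_Mapping.lookup a i) * x * y)
     = Poly_Mapping.single (a + b - var_exp i) (of_nat (Poly_Mapping.lookup a i) * x * y)"
    using diff_var_exp_add[of a i b] by (cases "Poly_Mapping.lookup a i > 0") auto
  have right: "Poly_Mapping.single (a + (b - var_exp i)) (x * (of_nat (Poly_Mapping.lookup b i) * y))
     = Poly_Mapping.single (a + b - var_exp i) (of_nat (Poly_Mapping.lookup b i) * x * y)"
    using diff_var_exp_add[of b i a]
    by (cases "Poly_Mapping.lookup b i > 0") (auto simp: add.commute algebra_simps)
  show ?thesis
    unfolding mult_single pderiv_m_single left right
    by (simp add: lookup_add single_add[symmetric] algebra_simps)
qed

lemma pderiv_m_mult: "pderiv_m i (u * v) = pderiv_m i u * v + u * pderiv_m i v"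
proof -
  let ?s = "\<lambda>w m. Poly_Mapping.single m (Poly_Mapping.lookup w m)"
  let ?A = "Poly_Mapping.keys u" and ?B = "Poly_Mapping.keys v"
  have "u * v = (\<Sum>a\<in>?A. \<Sum>b\<in>?B. ?s u a * ?s v b)"
    by (subst (1 2) poly_mapping_sum_single) (simp add: sum_product)
  hence "pderiv_m i (u * v) =
      (\<Sum>a\<in>?A. \<Sum>b\<in>?B. pderiv_m i (?s u a) * ?s v b + ?s u a * pderiv_m i (?s v b))"
    by (simp add: pderiv_m_sum pderiv_m_mult_single)
  also have "\<dots> = (\<Sum>a\<in>?A. pderiv_m i (?s u a)) * (\<Sum>b\<in>?B. ?s v b)
      + (\<Sum>a\<in>?A. ?s u a) * (\<Sum>b\<in>?B. pderiv_m i (?s v b))"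
    by (simp add: sum.distrib sum_product)
  also have "\<dots> = pderiv_m i u * v + u * pderiv_m i v"
    by (simp add: pderiv_m_sum[symmetric] poly_mapping_sum_single[symmetric])
  finally show ?thesis .
qed

lemma mconst_simps:
  "mconst 0 = 0" "mconst 1 = 1" "mconst (x + y) = mconst x + mconst y"
  "mconst (x * y) = mconst x * mconst y" "mconst (- x) = - mconst x"
  "mconst (x - y) = mconst x - mconst y"
  by (simp_all add: mconst_def single_add mult_single single_uminus single_diff)

lemma mconst_sum: "mconst (sum f S) = (\<Sum>s\<in>S. mconst (f s))"
  by (induction S rule: infinite_finite_induct) (auto simp: mconst_simps)

lemma pderiv_m_mconst [simp]: "pderiv_m i (mconst c) = 0"
  by (simp add: mconst_def pderiv_m_single)

lemma pderiv_m_one [simp]: "pderiv_m i 1 = 0"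
  using pderiv_m_mconst[of i 1] by (simp add: mconst_simps)

lemma pderiv_m_mvar: "pderiv_m i (mvar j) = (if i = j then 1 else 0)"
  by (simp add: mvar_def pderiv_m_single lookup_single when_def)

lemma pderiv_m_pvar: "pderiv_m i (pvar k) = (if i = k then 1 else 0)"
  by (simp add: pvar_def pderiv_m_mvar)

lemma pderiv_m_qvar: "pderiv_m i (qvar n k) = (if i = n + k then 1 else 0)"
  by (simp add: qvar_def pderiv_m_mvar)

section \<open>Degree in the \<open>q\<close>-variables\<close>

definition qdeg :: "nat \<Rightarrow> (nat \<Rightarrow>\<^sub>0 nat) \<Rightarrow> nat" where
  "qdeg n m = (\<Sum>j\<in>{n<..2*n}. Poly_Mapping.lookup m j)"

lemma qdeg_add: "qdeg n (a + b) = qdeg n a + qdeg n b"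
  by (simp add: qdeg_def lookup_add sum.distrib)

lemma qdeg_var_exp: "qdeg n (var_exp i) = (if i \<in> {n<..2*n} then 1 else 0)"
  by (simp add: qdeg_def lookup_single when_def)

definition qdeg_le :: "nat \<Rightarrow> nat \<Rightarrow> mpoly \<Rightarrow> bool" where
  "qdeg_le n d u \<longleftrightarrow> (\<forall>m\<in>Poly_Mapping.keys u. qdeg n m \<le> d)"

lemma qdeg_le_uminus: "qdeg_le n d u \<Longrightarrow> qdeg_le n d (- u)"
  unfolding qdeg_le_def by simp

lemma qdeg_le_sum: "(\<And>s. s \<in> S \<Longrightarrow> qdeg_le n d (f s)) \<Longrightarrow> qdeg_le n d (sum f S)"
  unfolding qdeg_le_def using keys_sum[of f S] by blast

lemma qdeg_le_mult: "qdeg_le n d1 u \<Longrightarrow> qdeg_le n d2 v \<Longrightarrow> qdeg_le n (d1 + d2) (u * v)"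
  unfolding qdeg_le_def using keys_mult[of u v] by (fastforce simp: qdeg_add intro: add_mono)

lemma qdeg_le_mono: "qdeg_le n d u \<Longrightarrow> d \<le> d' \<Longrightarrow> qdeg_le n d' u"
  unfolding qdeg_le_def by force

lemma qdeg_le_mconst: "qdeg_le n 0 (mconst c)"
  by (simp add: qdeg_le_def mconst_def qdeg_def)

lemma qdeg_le_smult: "qdeg_le n d u \<Longrightarrow> qdeg_le n d (mconst c * u)"
  using qdeg_le_mult[OF qdeg_le_mconst] by fastforce

lemma qdeg_le_mvar: "qdeg_le n 1 (mvar i)"
  using qdeg_var_exp[of n i] by (simp add: qdeg_le_def mvar_def)

lemma qdeg_le_pvar: "k \<le> n \<Longrightarrow> qdeg_le n 0 (pvar k)"
  using qdeg_var_exp[of n k] by (simp add: qdeg_le_def mvar_def pvar_def)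

lemma qdeg_diff_var_exp:
  assumes "Poly_Mapping.lookup m i > 0"
  shows "qdeg n m = qdeg n (m - var_exp i) + (if i \<in> {n<..2*n} then 1 else 0)"
proof -
  have "m = (m - var_exp i) + var_exp i"
    by (rule poly_mapping_eqI) (use assms in \<open>auto simp: lookup_add lookup_minus lookup_single when_def\<close>)
  hence "qdeg n m = qdeg n ((m - var_exp i) + var_exp i)" by simp
  thus ?thesis using qdeg_var_exp[of n i] by (simp add: qdeg_add)
qed

lemma keys_pderiv_m:
  "Poly_Mapping.keys (pderiv_m i u) \<subseteq>
     {m - var_exp i | m. m \<in> Poly_Mapping.keys u \<and> Poly_Mapping.lookup m i > 0}"
proof -
  have "Poly_Mapping.keys (pderiv_m i u) \<subseteq> (\<Union>m\<in>Poly_Mapping.keys u. Poly_Mapping.keys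
     (Poly_Mapping.single (m - var_exp i) (of_nat (Poly_Mapping.lookup m i) * Poly_Mapping.lookup u m)))"
    unfolding pderiv_m_def by (rule keys_sum)
  also have "\<dots> \<subseteq> {m - var_exp i | m. m \<in> Poly_Mapping.keys u \<and> Poly_Mapping.lookup m i > 0}"
    by (auto split: if_splits)
  finally show ?thesis .
qed

lemma qdeg_le_pderiv_m: "qdeg_le n d u \<Longrightarrow> qdeg_le n d (pderiv_m i u)"
  unfolding qdeg_le_def using keys_pderiv_m[of i u] qdeg_diff_var_exp[of _ i n] by fastforce

lemma qdeg_le_pderiv_m_q:
  assumes "qdeg_le n d u" "i \<in> {n<..2*n}"
  shows "qdeg_le n (d - 1) (pderiv_m i u) \<and> (d = 0 \<longrightarrow> pderiv_m i u = 0)"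
proof -
  have "\<forall>m\<in>Poly_Mapping.keys (pderiv_m i u). qdeg n m + 1 \<le> d"
    using keys_pderiv_m[of i u] qdeg_diff_var_exp[of _ i n] assms unfolding qdeg_le_def by fastforce
  thus ?thesis unfolding qdeg_le_def using keys_eq_empty by fastforce
qed

definition count_q :: "nat \<Rightarrow> nat list \<Rightarrow> nat" where
  "count_q n is = length (filter (\<lambda>i. i \<in> {n<..2*n}) is)"

lemma qdeg_le_pderivs:
  assumes "qdeg_le n d u"
  shows "qdeg_le n (d - count_q n is) (pderivs is u) \<and> (count_q n is > d \<longrightarrow> pderivs is u = 0)"
proof (induction "is")
  case Nil
  then show ?case using assms by (simp add: pderivs_def count_q_def)
next
  case (Cons i "is")
  have unfold: "pderivs (i # is) u = pderiv_m i (pderivs is u)" by (simp add: pderivs_def)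
  show ?case
  proof (cases "i \<in> {n<..2*n}")
    case True
    hence "count_q n (i # is) = Suc (count_q n is)" by (simp add: count_q_def)
    with Cons qdeg_le_pderiv_m_q[OF conjunct1[OF Cons] True] show ?thesis
      unfolding unfold by (auto simp: qdeg_le_def)
  next
    case False
    hence "count_q n (i # is) = count_q n is" by (simp add: count_q_def)
    with Cons qdeg_le_pderiv_m show ?thesis unfolding unfold by auto
  qed
qed

lemma count_q_complementary:
  "length is = length js \<Longrightarrow> (\<forall>k<length is. is ! k \<in> {n<..2*n} \<longleftrightarrow> js ! k \<notin> {n<..2*n})
   \<Longrightarrow> count_q n is + count_q n js = length is"
proof (induction "is" arbitrary: js)
  case Nil thus ?case by (simp add: count_q_def)
next
  case (Cons i "is")
  then obtain j js' where js: "js = j # js'" by (cases js) auto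
  have "\<forall>k<length is. is ! k \<in> {n<..2*n} \<longleftrightarrow> js' ! k \<notin> {n<..2*n}"
    using Cons(3) js by (metis Suc_less_eq length_Cons nth_Cons_Suc)
  hence "count_q n is + count_q n js' = length is" using Cons js by simp
  moreover have "i \<in> {n<..2*n} \<longleftrightarrow> j \<notin> {n<..2*n}"
    using Cons(3) js by (metis length_Cons nth_Cons_0 zero_less_Suc)
  ultimately show ?case using js by (auto simp: count_q_def)
qed

lemma Lam_nonzero_q_index_iff: "Lam n i j \<noteq> 0 \<Longrightarrow> i \<in> {n<..2*n} \<longleftrightarrow> j \<notin> {n<..2*n}"
  by (auto simp: Lam_def split: if_splits)

lemma Pl_eq_0_if_qdeg_le_1:
  assumes u: "qdeg_le n 1 u" and v: "qdeg_le n 1 v" and l: "l \<ge> 3"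
  shows "Pl n l u v = 0"
  unfolding Pl_def
proof (intro sum.neutral ballI)
  fix "is" js assume "is": "is \<in> idx_lists n l" and js: "js \<in> idx_lists n l"
  show "mconst (\<Prod>k<l. Lam n (is ! k) (js ! k)) * pderivs is u * pderivs js v = 0"
  proof (cases "(\<Prod>k<l. Lam n (is ! k) (js ! k)) = 0")
    case True thus ?thesis by (simp only: True mconst_simps) simp
  next
    case False
    hence "count_q n is + count_q n js = l"
      using "is" js Lam_nonzero_q_index_iff by (intro trans[OF count_q_complementary]) (auto simp: idx_lists_def)
    hence "count_q n is > 1 \<or> count_q n js > 1" using l by linarith
    thus ?thesis using qdeg_le_pderivs[OF u, of "is"] qdeg_le_pderivs[OF v, of js] by auto
  qed
qed

section \<open>The Poisson bracket\<close>

definition poisson :: "nat \<Rightarrow> mpoly \<Rightarrow> mpoly \<Rightarrow> mpoly" where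
  "poisson n u v = (\<Sum>i\<in>{1..2*n}. \<Sum>j\<in>{1..2*n}. mconst (Lam n i j) * pderiv_m i u * pderiv_m j v)"

lemma Pl_1_eq_poisson: "Pl n 1 u v = poisson n u v"
proof -
  have lists: "idx_lists n 1 = (\<lambda>i. [i]) ` {1..2*n}"
    by (auto simp: idx_lists_def length_Suc_conv)
  have inj: "inj_on (\<lambda>i. [i]) {1..2*n}" by (auto simp: inj_on_def)
  show ?thesis unfolding Pl_def poisson_def lists sum.reindex[OF inj]
    by (simp add: pderivs_def)
qed

lemma star_bracket_eq_poisson:
  assumes "qdeg_le n 1 u" "qdeg_le n 1 v"
  shows "star_bracket n u v = poisson n u v"
proof -
  let ?term = "\<lambda>l. mconst ((-1/4) ^ l / of_nat (fact (2*l+1))) * Pl n (2*l+1) u v"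
  have "{l. ?term l \<noteq> 0} \<subseteq> {0}"
  proof
    fix l assume "l \<in> {l. ?term l \<noteq> 0}"
    hence "Pl n (2*l+1) u v \<noteq> 0" by auto
    thus "l \<in> {0}" using Pl_eq_0_if_qdeg_le_1[OF assms, of "2*l+1"] by fastforce
  qed
  hence "star_bracket n u v = (\<Sum>l\<in>{0}. ?term l)"
    unfolding star_bracket_def by (intro Sum_any.expand_superset) simp_all
  thus ?thesis using Pl_1_eq_poisson[of n u v] by (simp add: mconst_simps)
qed

lemma poisson_antisym: "poisson n u v = - poisson n v u"
proof -
  have "poisson n v u =
      (\<Sum>i\<in>{1..2*n}. \<Sum>j\<in>{1..2*n}. mconst (Lam n j i) * pderiv_m j v * pderiv_m i u)"
    unfolding poisson_def by (rule sum.swap)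
  also have "\<dots> = (\<Sum>i\<in>{1..2*n}. \<Sum>j\<in>{1..2*n}. - (mconst (Lam n i j) * pderiv_m i u * pderiv_m j v))"
    by (intro sum.cong refl) (auto simp: Lam_def mconst_simps)
  finally show ?thesis unfolding poisson_def by (simp add: sum_negf)
qed

lemma poisson_self: "poisson n u u = 0"
proof (rule poly_mapping_eqI)
  fix m
  have "Poly_Mapping.lookup (poisson n u u) m = - Poly_Mapping.lookup (poisson n u u) m"
    by (metis poisson_antisym lookup_uminus)
  thus "Poly_Mapping.lookup (poisson n u u) m = Poly_Mapping.lookup 0 m" by simp
qed

lemma poisson_add_left: "poisson n (u + w) v = poisson n u v + poisson n w v"
  by (simp add: poisson_def pderiv_m_add algebra_simps sum.distrib)

lemma poisson_zero_left [simp]: "poisson n 0 v = 0"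
  by (simp add: poisson_def)

lemma poisson_sum_left: "poisson n (sum f S) v = (\<Sum>s\<in>S. poisson n (f s) v)"
  by (induction S rule: infinite_finite_induct) (auto simp: poisson_add_left)

lemma poisson_mult_left: "poisson n (f * g) h = f * poisson n g h + g * poisson n f h"
  by (simp add: poisson_def pderiv_m_mult algebra_simps sum.distrib sum_distrib_left)

lemma poisson_mconst_left [simp]: "poisson n (mconst c) h = 0"
  by (simp add: poisson_def)

lemma poisson_one_left [simp]: "poisson n 1 h = 0"
  using poisson_mconst_left[of n 1 h] by (simp add: mconst_simps)

lemma poisson_smult_left: "poisson n (mconst c * u) v = mconst c * poisson n u v"
  by (simp add: poisson_mult_left)

lemma poisson_sum_right: "poisson n v (sum f S) = (\<Sum>s\<in>S. poisson n v (f s))"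
  by (subst (1 2) poisson_antisym) (simp add: poisson_sum_left sum_negf)

lemma poisson_mult_right: "poisson n h (f * g) = f * poisson n h g + g * poisson n h f"
  by (subst (1 2 3) poisson_antisym) (simp add: poisson_mult_left)

lemma poisson_smult_right: "poisson n v (mconst c * u) = mconst c * poisson n v u"
  by (subst (1 2) poisson_antisym) (simp add: poisson_smult_left)

lemma poisson_sum_smult:
  "poisson n (\<Sum>i\<in>I. mconst (x i) * f i) (\<Sum>k\<in>K. mconst (y k) * g k)
   = (\<Sum>i\<in>I. \<Sum>k\<in>K. mconst (x i * y k) * poisson n (f i) (g k))"
proof -
  have "poisson n (\<Sum>i\<in>I. mconst (x i) * f i) (\<Sum>k\<in>K. mconst (y k) * g k)
      = (\<Sum>i\<in>I. mconst (x i) * poisson n (f i) (\<Sum>k\<in>K. mconst (y k) * g k))"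
    by (simp add: poisson_sum_left poisson_smult_left)
  also have "\<dots> = (\<Sum>i\<in>I. \<Sum>k\<in>K. mconst (x i * y k) * poisson n (f i) (g k))"
    by (simp add: poisson_sum_right poisson_smult_right sum_distrib_left mconst_simps mult.assoc)
  finally show ?thesis .
qed

lemma poisson_pvar_left:
  assumes "1 \<le> k" "k \<le> n"
  shows "poisson n (pvar k) f = pderiv_m (n + k) f"
proof -
  have "poisson n (pvar k) f = (\<Sum>i\<in>{1..2*n}.
      if i = k then (\<Sum>j\<in>{1..2*n}. mconst (Lam n k j) * pderiv_m j f) else 0)"
    unfolding poisson_def by (intro sum.cong refl) (auto simp: pderiv_m_pvar sum_distrib_left)
  also have "\<dots> = (\<Sum>j\<in>{1..2*n}. mconst (Lam n k j) * pderiv_m j f)"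
    using assms by simp
  also have "\<dots> = (\<Sum>j\<in>{1..2*n}. if j = n + k then pderiv_m j f else 0)"
    using assms by (intro sum.cong refl) (auto simp: Lam_def mconst_simps)
  finally show ?thesis using assms by simp
qed

lemma poisson_qvar_left:
  assumes "1 \<le> k" "k \<le> n"
  shows "poisson n (qvar n k) f = - pderiv_m k f"
proof -
  have "poisson n (qvar n k) f = (\<Sum>i\<in>{1..2*n}.
      if i = n + k then (\<Sum>j\<in>{1..2*n}. mconst (Lam n (n + k) j) * pderiv_m j f) else 0)"
    unfolding poisson_def by (intro sum.cong refl) (auto simp: pderiv_m_qvar sum_distrib_left)
  also have "\<dots> = (\<Sum>j\<in>{1..2*n}. mconst (Lam n (n + k) j) * pderiv_m j f)"
    using assms by simp
  also have "\<dots> = (\<Sum>j\<in>{1..2*n}. if j = k then - pderiv_m j f else 0)"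
    using assms by (intro sum.cong refl) (auto simp: Lam_def mconst_simps)
  finally show ?thesis using assms by simp
qed

section \<open>The moment map and the cocycle \<open>\<phi>\<^sub>1\<close>\<close>

definition pq_sum :: "nat \<Rightarrow> mpoly" where
  "pq_sum n = (\<Sum>k=1..n. pvar k * qvar n k)"

definition pcol :: "nat \<Rightarrow> mpoly" where
  "pcol b = (if b = 1 then 1 else pvar (b - 1))"

definition qrow :: "nat \<Rightarrow> nat \<Rightarrow> mpoly" where
  "qrow n a = (if a = 1 then - pq_sum n else qvar n (a - 1))"

definition phi1_form :: "nat \<Rightarrow> cmat \<Rightarrow> mpoly" where
  "phi1_form n X = (\<Sum>b=1..n+1. mconst (X 1 b) * pcol b)"

lemma Psi_eq_pcol_qrow: "Psi n i j = pcol i * qrow n j"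
  by (simp add: Psi_def Psi_row1_def pcol_def qrow_def pq_sum_def)

lemma tilde_eq_sum_pairs:
  "tilde n X = (\<Sum>p\<in>{1..n+1} \<times> {1..n+1}. mconst (X (snd p) (fst p)) * (qrow n (snd p) * pcol (fst p)))"
  unfolding tilde_def Psi_eq_pcol_qrow sum.cartesian_product' by (simp add: mult_ac)

lemma pderiv_m_pq_sum_p:
  assumes "1 \<le> k" "k \<le> n"
  shows "pderiv_m k (pq_sum n) = qvar n k"
proof -
  have "pderiv_m k (pq_sum n) = (\<Sum>j=1..n. if j = k then qvar n j else 0)"
    unfolding pq_sum_def pderiv_m_sum using assms
    by (intro sum.cong refl) (auto simp: pderiv_m_mult pderiv_m_pvar pderiv_m_qvar)
  thus ?thesis using assms by simp
qed

lemma pderiv_m_pq_sum_q: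
  assumes "1 \<le> k" "k \<le> n"
  shows "pderiv_m (n + k) (pq_sum n) = pvar k"
proof -
  have "pderiv_m (n + k) (pq_sum n) = (\<Sum>j=1..n. if j = k then pvar j else 0)"
    unfolding pq_sum_def pderiv_m_sum using assms
    by (intro sum.cong refl) (auto simp: pderiv_m_mult pderiv_m_pvar pderiv_m_qvar)
  thus ?thesis using assms by simp
qed

lemma poisson_pcol_pcol:
  assumes "a \<in> {1..n+1}" "b \<in> {1..n+1}"
  shows "poisson n (pcol a) (pcol b) = 0"
  using assms by (auto simp: pcol_def poisson_pvar_left pderiv_m_pvar)

lemma poisson_pcol_qrow:
  assumes "a \<in> {1..n+1}" "b \<in> {1..n+1}"
  shows "poisson n (pcol a) (qrow n b) = (if a = b then 1 else 0) - (if b = 1 then pcol a else 0)"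
proof (cases "a = 1")
  case True thus ?thesis by (simp add: pcol_def)
next
  case False
  hence a: "1 \<le> a - 1" "a - 1 \<le> n" using assms by auto
  have bracket: "poisson n (pcol a) f = pderiv_m (n + (a - 1)) f" for f
    using False poisson_pvar_left[OF a] by (simp add: pcol_def)
  show ?thesis
  proof (cases "b = 1")
    case True
    have "poisson n (pcol a) (qrow n b) = pderiv_m (n + (a - 1)) (- pq_sum n)"
      by (simp add: bracket qrow_def True)
    also have "\<dots> = - pvar (a - 1)" using pderiv_m_pq_sum_q[OF a] by (simp add: pderiv_m_uminus)
    finally show ?thesis using False True by (simp add: pcol_def)
  next
    case False
    thus ?thesis using \<open>a \<noteq> 1\<close> assms by (auto simp: bracket qrow_def pderiv_m_qvar)
  qed
qed

lemma poisson_qrow_pcol: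
  assumes "a \<in> {1..n+1}" "b \<in> {1..n+1}"
  shows "poisson n (qrow n b) (pcol a) = (if b = 1 then pcol a else 0) - (if a = b then 1 else 0)"
  using poisson_antisym[of n "qrow n b" "pcol a"] poisson_pcol_qrow[OF assms] by simp

lemma poisson_qrow_qrow:
  assumes "a \<in> {1..n+1}" "b \<in> {1..n+1}"
  shows "poisson n (qrow n a) (qrow n b) = (if b = 1 then qrow n a else 0) - (if a = 1 then qrow n b else 0)"
proof -
  have bracket: "poisson n (qrow n c) f = - pderiv_m (c - 1) f" if "c \<in> {1..n+1}" "c \<noteq> 1" for c f
    using that poisson_qvar_left[of "c - 1" n f] by (auto simp: qrow_def)
  have with_first: "poisson n (qrow n c) (qrow n 1) = qrow n c" if "c \<in> {1..n+1}" "c \<noteq> 1" for c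
    using that bracket[OF that] pderiv_m_pq_sum_p[of "c - 1" n] by (auto simp: qrow_def pderiv_m_uminus)
  consider "a = 1" "b = 1" | "a = 1" "b \<noteq> 1" | "a \<noteq> 1" "b = 1" | "a \<noteq> 1" "b \<noteq> 1" by blast
  thus ?thesis
  proof cases
    case 1 thus ?thesis by (simp add: poisson_self)
  next
    case 2 thus ?thesis using poisson_antisym[of n "qrow n 1" "qrow n b"] with_first[of b] assms by simp
  next
    case 3 thus ?thesis using with_first[of a] assms by simp
  next
    case 4 thus ?thesis using bracket[of a] assms by (auto simp: qrow_def pderiv_m_qvar)
  qed
qed

lemma poisson_qrow_pcol_qrow_pcol:
  assumes "a \<in> {1..n+1}" "b \<in> {1..n+1}" "c \<in> {1..n+1}" "d \<in> {1..n+1}"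
  shows "poisson n (qrow n a * pcol b) (qrow n c * pcol d) =
    (if b = c then qrow n a * pcol d else 0) - (if a = d then qrow n c * pcol b else 0)"
  using assms
  by (simp add: poisson_mult_left poisson_mult_right poisson_pcol_pcol poisson_pcol_qrow
      poisson_qrow_pcol poisson_qrow_qrow) (auto simp: algebra_simps)

lemma poisson_qrow_pcol_pcol:
  assumes "a \<in> {1..n+1}" "b \<in> {1..n+1}" "d \<in> {1..n+1}"
  shows "poisson n (qrow n a * pcol b) (pcol d) =
    (if a = 1 then pcol b * pcol d else 0) - (if d = a then pcol b else 0)"
  using assms by (simp add: poisson_mult_left poisson_pcol_pcol poisson_qrow_pcol) (auto simp: algebra_simps)

lemma poisson_pcol_qrow_pcol:
  assumes "b \<in> {1..n+1}" "c \<in> {1..n+1}" "d \<in> {1..n+1}"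
  shows "poisson n (pcol b) (qrow n c * pcol d) =
    (if b = c then pcol d else 0) - (if c = 1 then pcol d * pcol b else 0)"
  using assms by (simp add: poisson_mult_right poisson_pcol_pcol poisson_pcol_qrow) (auto simp: algebra_simps)

lemma sum_sum_if_eq:
  assumes "finite R" "j \<in> R"
  shows "(\<Sum>k\<in>R. \<Sum>l\<in>R. if k = j then g k l else 0) = (\<Sum>l\<in>R. g j l)"
proof -
  have "(\<Sum>k\<in>R. \<Sum>l\<in>R. if k = j then g k l else 0) = (\<Sum>k\<in>R. if k = j then (\<Sum>l\<in>R. g k l) else 0)"
    by (rule sum.cong) auto
  thus ?thesis using assms by simp
qed

lemma poisson_tilde_tilde: "poisson n (tilde n X) (tilde n Y) = tilde n (commutator n X Y)"
proof -
  define R where "R = {1..n+1}"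
  have fin: "finite R" by (simp add: R_def)
  have tilde_R: "tilde n Z = (\<Sum>i\<in>R. \<Sum>j\<in>R. mconst (Z j i) * (qrow n j * pcol i))" for Z
    unfolding tilde_eq_sum_pairs sum.cartesian_product' R_def by simp
  have mat_mult_R: "mat_mult n Z Z' = (\<lambda>i j. \<Sum>k\<in>R. Z i k * Z' k j)" for Z Z'
    unfolding mat_mult_def R_def ..
  have "poisson n (tilde n X) (tilde n Y) = (\<Sum>i\<in>R. \<Sum>j\<in>R. \<Sum>k\<in>R. \<Sum>l\<in>R.
      mconst (X j i * Y l k) * poisson n (qrow n j * pcol i) (qrow n l * pcol k))"
    unfolding tilde_eq_sum_pairs poisson_sum_smult unfolding sum.cartesian_product' R_def by simp
  also have "\<dots> = (\<Sum>i\<in>R. \<Sum>j\<in>R. \<Sum>k\<in>R. \<Sum>l\<in>R.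
      (if l = i then mconst (X j i * Y l k) * (qrow n j * pcol k) else 0)
      - (if k = j then mconst (X j i * Y l k) * (qrow n l * pcol i) else 0))"
    by (intro sum.cong refl) (auto simp: poisson_qrow_pcol_qrow_pcol R_def right_diff_distrib)
  also have "\<dots> = (\<Sum>i\<in>R. \<Sum>j\<in>R. \<Sum>k\<in>R. mconst (X j i * Y i k) * (qrow n j * pcol k))
      - (\<Sum>i\<in>R. \<Sum>j\<in>R. \<Sum>l\<in>R. mconst (X j i * Y l j) * (qrow n l * pcol i))"
  proof -
    have "(\<Sum>k\<in>R. \<Sum>l\<in>R. if k = j then g k l else 0) = (\<Sum>l\<in>R. g j l)"
      if "j \<in> R" for j and g :: "nat \<Rightarrow> nat \<Rightarrow> mpoly"
      using sum_sum_if_eq[OF fin that] .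
    moreover have "(\<Sum>k\<in>R. \<Sum>l\<in>R. if l = i then g k l else 0) = (\<Sum>k\<in>R. g k i)"
      if "i \<in> R" for i and g :: "nat \<Rightarrow> nat \<Rightarrow> mpoly"
      using that fin by (simp add: sum.delta')
    ultimately show ?thesis by (simp add: sum_subtractf)
  qed
  also have "\<dots> = (\<Sum>k\<in>R. \<Sum>j\<in>R. mconst (mat_mult n X Y j k) * (qrow n j * pcol k))
      - (\<Sum>i\<in>R. \<Sum>l\<in>R. mconst (mat_mult n Y X l i) * (qrow n l * pcol i))"
  proof -
    have "(\<Sum>i\<in>R. \<Sum>j\<in>R. \<Sum>k\<in>R. mconst (X j i * Y i k) * (qrow n j * pcol k))
      = (\<Sum>k\<in>R. \<Sum>j\<in>R. \<Sum>i\<in>R. mconst (X j i * Y i k) * (qrow n j * pcol k))"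
      by (subst sum.swap, subst (2) sum.swap, rule sum.cong[OF refl], rule sum.swap)
    also have "\<dots> = (\<Sum>k\<in>R. \<Sum>j\<in>R. mconst (mat_mult n X Y j k) * (qrow n j * pcol k))"
      by (simp add: mat_mult_R mconst_sum sum_distrib_right)
    finally have XY: "(\<Sum>i\<in>R. \<Sum>j\<in>R. \<Sum>k\<in>R. mconst (X j i * Y i k) * (qrow n j * pcol k)) = \<dots>" .
    have "(\<Sum>i\<in>R. \<Sum>j\<in>R. \<Sum>l\<in>R. mconst (X j i * Y l j) * (qrow n l * pcol i))
      = (\<Sum>i\<in>R. \<Sum>l\<in>R. \<Sum>j\<in>R. mconst (X j i * Y l j) * (qrow n l * pcol i))"
      by (rule sum.cong[OF refl], rule sum.swap)
    also have "\<dots> = (\<Sum>i\<in>R. \<Sum>l\<in>R. mconst (mat_mult n Y X l i) * (qrow n l * pcol i))"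
      by (simp add: mat_mult_R mconst_sum sum_distrib_right sum_distrib_left mult.commute)
    finally show ?thesis using XY by simp
  qed
  also have "\<dots> = tilde n (commutator n X Y)"
    unfolding tilde_R commutator_def by (simp add: mconst_simps left_diff_distrib sum_subtractf)
  finally show ?thesis .
qed

lemma poisson_tilde_phi1_form:
  "poisson n (tilde n X) (phi1_form n Y) + poisson n (phi1_form n X) (tilde n Y) =
     phi1_form n (commutator n X Y)"
proof -
  define R where "R = {1..n+1}"
  have fin: "finite R" and one: "1 \<in> R" by (auto simp: R_def)
  have form_R: "phi1_form n Z = (\<Sum>b\<in>R. mconst (Z 1 b) * pcol b)" for Z
    unfolding phi1_form_def R_def ..
  have mat_mult_R: "mat_mult n Z Z' = (\<lambda>i j. \<Sum>k\<in>R. Z i k * Z' k j)" for Z Z'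
    unfolding mat_mult_def R_def ..
  have "poisson n (tilde n X) (phi1_form n Y) = (\<Sum>i\<in>R. \<Sum>j\<in>R. \<Sum>d\<in>R.
      (if j = 1 then mconst (X j i * Y 1 d) * (pcol i * pcol d) else 0)
      - (if d = j then mconst (X j i * Y 1 d) * pcol i else 0))"
    unfolding tilde_eq_sum_pairs phi1_form_def poisson_sum_smult unfolding sum.cartesian_product' R_def
    by (intro sum.cong refl) (auto simp: poisson_qrow_pcol_pcol right_diff_distrib)
  also have "\<dots> = (\<Sum>i\<in>R. \<Sum>d\<in>R. mconst (X 1 i * Y 1 d) * (pcol i * pcol d))
      - (\<Sum>i\<in>R. \<Sum>j\<in>R. mconst (X j i * Y 1 j) * pcol i)"
  proof -
    have "(\<Sum>j\<in>R. \<Sum>d\<in>R. if j = 1 then mconst (X j i * Y 1 d) * (pcol i * pcol d) else 0)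
       = (\<Sum>d\<in>R. mconst (X 1 i * Y 1 d) * (pcol i * pcol d))" for i
      by (rule sum_sum_if_eq[OF fin one, of "\<lambda>j d. mconst (X j i * Y 1 d) * (pcol i * pcol d)"])
    thus ?thesis by (simp only: sum_subtractf) (simp add: fin)
  qed
  also have "\<dots> = (\<Sum>i\<in>R. \<Sum>d\<in>R. mconst (X 1 i * Y 1 d) * (pcol i * pcol d))
      - (\<Sum>i\<in>R. mconst (mat_mult n Y X 1 i) * pcol i)"
    by (simp add: mat_mult_R mconst_sum sum_distrib_right sum_distrib_left mult.commute)
  finally have tilde_form: "poisson n (tilde n X) (phi1_form n Y) = \<dots>" .
  have "poisson n (phi1_form n X) (tilde n Y) = (\<Sum>b\<in>R. \<Sum>k\<in>R. \<Sum>l\<in>R.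
      (if b = l then mconst (X 1 b * Y l k) * pcol k else 0)
      - (if l = 1 then mconst (X 1 b * Y l k) * (pcol k * pcol b) else 0))"
    unfolding tilde_eq_sum_pairs phi1_form_def poisson_sum_smult unfolding sum.cartesian_product' R_def
    by (intro sum.cong refl) (auto simp: poisson_pcol_qrow_pcol right_diff_distrib)
  also have "\<dots> = (\<Sum>b\<in>R. \<Sum>k\<in>R. mconst (X 1 b * Y b k) * pcol k)
      - (\<Sum>b\<in>R. \<Sum>k\<in>R. mconst (X 1 b * Y 1 k) * (pcol k * pcol b))"
    using one by (simp add: sum_subtractf fin)
  also have "\<dots> = (\<Sum>k\<in>R. mconst (mat_mult n X Y 1 k) * pcol k)
      - (\<Sum>i\<in>R. \<Sum>d\<in>R. mconst (X 1 i * Y 1 d) * (pcol i * pcol d))"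
    by (subst sum.swap) (simp add: mat_mult_R mconst_sum sum_distrib_left sum_distrib_right mult.commute)
  finally have form_tilde: "poisson n (phi1_form n X) (tilde n Y) = \<dots>" .
  show ?thesis
    unfolding tilde_form form_tilde unfolding form_R commutator_def
    by (simp add: mconst_simps left_diff_distrib sum_subtractf)
qed

lemma poisson_phi1_form_phi1_form: "poisson n (phi1_form n X) (phi1_form n Y) = 0"
  unfolding phi1_form_def poisson_sum_smult by (intro sum.neutral ballI) (simp add: poisson_pcol_pcol)

lemma qdeg_le_pcol: "b \<le> n + 1 \<Longrightarrow> qdeg_le n 0 (pcol b)"
  using qdeg_le_mconst[of n 1] by (simp add: pcol_def qdeg_le_pvar mconst_simps)

lemma qdeg_le_qrow: "qdeg_le n 1 (qrow n a)"
proof -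
  have "qdeg_le n 1 (pq_sum n)" unfolding pq_sum_def
    by (rule qdeg_le_sum) (use qdeg_le_mult[OF qdeg_le_pvar qdeg_le_mvar] in \<open>auto simp: qvar_def\<close>)
  thus ?thesis using qdeg_le_mvar[of n] by (simp add: qrow_def qdeg_le_uminus qvar_def)
qed

lemma qdeg_le_tilde: "qdeg_le n 1 (tilde n X)"
  unfolding tilde_eq_sum_pairs
  by (intro qdeg_le_sum) (use qdeg_le_mult[OF qdeg_le_mconst qdeg_le_mult[OF qdeg_le_qrow qdeg_le_pcol]] in auto)

lemma qdeg_le_phi1_form: "qdeg_le n 1 (phi1_form n X)"
  unfolding phi1_form_def
  by (intro qdeg_le_sum) (use qdeg_le_mult[OF qdeg_le_mconst qdeg_le_pcol] qdeg_le_mono in fastforce)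

section \<open>Linear maps on \<open>sl(n+1)\<close>\<close>

lemma sl_sum: "(\<And>x. x \<in> S \<Longrightarrow> f x \<in> sl n) \<Longrightarrow> (\<lambda>i j. \<Sum>x\<in>S. f x i j) \<in> sl n"
proof -
  assume sl: "\<And>x. x \<in> S \<Longrightarrow> f x \<in> sl n"
  have "(\<Sum>i=1..n+1. \<Sum>x\<in>S. f x i i) = (\<Sum>x\<in>S. \<Sum>i=1..n+1. f x i i)" by (rule sum.swap)
  also have "\<dots> = 0" using sl by (simp add: sl_def)
  finally show ?thesis using sl by (auto simp: sl_def)
qed

lemma sl_smult:
  assumes "X \<in> sl n"
  shows "(\<lambda>i j. c * X i j) \<in> sl n"
proof -
  have "(\<Sum>i=1..n+1. c * X i i) = c * (\<Sum>i=1..n+1. X i i)" by (rule sum_distrib_left[symmetric])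
  thus ?thesis using assms unfolding sl_def by auto
qed

lemma Emat_in_sl: "a \<in> {1..n+1} \<Longrightarrow> b \<in> {1..n+1} \<Longrightarrow> a \<noteq> b \<Longrightarrow> Emat a b \<in> sl n"
  by (auto simp: sl_def Emat_def intro!: sum.neutral)

lemma Emat_diag_diff_in_sl:
  "1 \<le> k \<Longrightarrow> k \<le> n \<Longrightarrow> (\<lambda>i j. Emat k k i j - Emat (k+1) (k+1) i j) \<in> sl n"
  by (auto simp: sl_def Emat_def sum_subtractf)

lemma commutator_in_sl:
  assumes X: "X \<in> sl n" and Y: "Y \<in> sl n"
  shows "commutator n X Y \<in> sl n"
proof -
  have outside: "commutator n X Y i j = 0" if "\<not> (i \<in> {1..n+1} \<and> j \<in> {1..n+1})" for i j
    using X Y that by (auto simp: sl_def commutator_def mat_mult_def intro!: sum.neutral)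
  have "(\<Sum>i=1..n+1. mat_mult n X Y i i) = (\<Sum>i=1..n+1. mat_mult n Y X i i)"
    unfolding mat_mult_def by (subst sum.swap) (simp add: mult.commute)
  hence "(\<Sum>i=1..n+1. commutator n X Y i i) = 0"
    by (simp add: commutator_def sum_subtractf)
  thus ?thesis using outside by (auto simp: sl_def)
qed

lemma additive_on_sl_sum:
  fixes \<phi> :: "cmat \<Rightarrow> 'a::ab_group_add"
  assumes add: "\<And>X Y. X \<in> sl n \<Longrightarrow> Y \<in> sl n \<Longrightarrow> \<phi> (\<lambda>i j. X i j + Y i j) = \<phi> X + \<phi> Y"
    and sl: "\<And>x. x \<in> T \<Longrightarrow> f x \<in> sl n"
  shows "\<phi> (\<lambda>i j. \<Sum>x\<in>T. f x i j) = (\<Sum>x\<in>T. \<phi> (f x))"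
proof -
  have zero: "(\<lambda>i j. 0) \<in> sl n" by (simp add: sl_def)
  have "\<phi> (\<lambda>i j. 0) + \<phi> (\<lambda>i j. 0) = \<phi> (\<lambda>i j. 0)"
    using add[OF zero zero] by simp
  hence \<phi>_zero: "\<phi> (\<lambda>i j. 0) = 0" by simp
  show ?thesis using sl
  proof (induction T rule: infinite_finite_induct)
    case (insert x F)
    have "(\<lambda>i j. \<Sum>y\<in>F. f y i j) \<in> sl n" using insert by (intro sl_sum) auto
    from add[OF _ this, of "f x"] insert show ?case by simp
  qed (simp_all add: \<phi>_zero)
qed

lemma sum_offdiag_Emat:
  assumes "finite R"
  shows "(\<Sum>a\<in>R. \<Sum>b\<in>R-{a}. X a b * Emat a b i j) = (if i \<in> R \<and> j \<in> R \<and> i \<noteq> j then X i j else 0)"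
proof -
  have "(\<Sum>b\<in>R-{a}. X a b * Emat a b i j) = (if a = i then (if j \<in> R - {a} then X a j else 0) else 0)" for a
  proof (cases "a = i")
    case True
    have "(\<Sum>b\<in>R-{a}. X a b * Emat a b i j) = (\<Sum>b\<in>R-{a}. if j = b then X a b else 0)"
      using True by (intro sum.cong refl) (simp add: Emat_def)
    thus ?thesis using True assms by simp
  qed (simp add: Emat_def)
  thus ?thesis using assms by (simp add: sum.delta)
qed

lemma sum_Emat_diag_diff:
  "(\<Sum>k=1..n. c k * (Emat k k i j - Emat (k+1) (k+1) i j)) =
     (if i = j \<and> 1 \<le> i \<and> i \<le> n then c i else 0) - (if i = j \<and> 2 \<le> i \<and> i \<le> n + 1 then c (i - 1) else 0)"
proof -
  have "(\<Sum>k=1..n. c k * (Emat k k i j - Emat (k+1) (k+1) i j)) =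
      (\<Sum>k=1..n. if k = i then (if i = j then c k else 0) else 0)
      - (\<Sum>k=1..n. if k = i - 1 then (if i = j \<and> 2 \<le> i then c k else 0) else 0)"
    unfolding sum_subtractf[symmetric] by (intro sum.cong refl) (auto simp: Emat_def)
  thus ?thesis by (simp add: sum.delta') linarith
qed

lemma sl_eq_Emat_combination:
  assumes X: "X \<in> sl n"
  shows "X = (\<lambda>i j. (\<Sum>a\<in>{1..n+1}. \<Sum>b\<in>{1..n+1}-{a}. X a b * Emat a b i j)
      + (\<Sum>k=1..n. (\<Sum>m=1..k. X m m) * (Emat k k i j - Emat (k+1) (k+1) i j)))"
proof (intro ext)
  fix i j
  define c where "c k = (\<Sum>m=1..k. X m m)" for k
  have c_last: "c (n + 1) = 0" using X by (simp add: sl_def c_def)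
  have diag: "X i i = (if 1 \<le> i \<and> i \<le> n then c i else 0) - (if 2 \<le> i \<and> i \<le> n + 1 then c (i - 1) else 0)"
  proof (cases "1 \<le> i \<and> i \<le> n + 1")
    case True
    then obtain m where m: "i = Suc m" "m \<le> n" by (cases i) auto
    have "X i i = c i - c m" by (simp add: c_def m)
    moreover have "c 0 = 0" by (simp add: c_def)
    ultimately show ?thesis using m c_last by (cases "m = 0"; cases "m = n") simp_all
  next
    case False thus ?thesis using X by (auto simp: sl_def)
  qed
  show "X i j = (\<Sum>a\<in>{1..n+1}. \<Sum>b\<in>{1..n+1}-{a}. X a b * Emat a b i j)
      + (\<Sum>k=1..n. c k * (Emat k k i j - Emat (k+1) (k+1) i j))"
    unfolding sum_offdiag_Emat[OF finite_atLeastAtMost] sum_Emat_diag_diff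
    using X diag by (auto simp: sl_def)
qed

lemma phi1_eq_phi1_form:
  fixes \<phi> :: "cmat \<Rightarrow> mpoly"
  assumes n: "n \<ge> 1"
    and lin_add: "\<And>X Y. X \<in> sl n \<Longrightarrow> Y \<in> sl n \<Longrightarrow> \<phi> (\<lambda>i j. X i j + Y i j) = \<phi> X + \<phi> Y"
    and lin_smult: "\<And>c X. X \<in> sl n \<Longrightarrow> \<phi> (\<lambda>i j. c * X i j) = mconst c * \<phi> X"
    and v1: "\<phi> (\<lambda>i j. Emat 1 1 i j - Emat 2 2 i j) = 1"
    and v2: "\<And>k. 2 \<le> k \<Longrightarrow> k \<le> n \<Longrightarrow> \<phi> (\<lambda>i j. Emat k k i j - Emat (k+1) (k+1) i j) = 0"
    and v3: "\<And>k. 1 \<le> k \<Longrightarrow> k \<le> n \<Longrightarrow> \<phi> (Emat 1 (k+1)) = pvar k"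
    and v4: "\<And>i j. 2 \<le> i \<Longrightarrow> i \<le> n+1 \<Longrightarrow> 1 \<le> j \<Longrightarrow> j \<le> n+1 \<Longrightarrow> j \<noteq> i \<Longrightarrow> \<phi> (Emat i j) = 0"
    and X: "X \<in> sl n"
  shows "\<phi> X = phi1_form n X"
proof -
  define R where "R = {1..n+1}"
  have fin: "finite R" by (simp add: R_def)
  define A where "A = (\<lambda>i j. \<Sum>a\<in>R. \<Sum>b\<in>R-{a}. X a b * Emat a b i j)"
  define B where "B = (\<lambda>i j. \<Sum>k=1..n. (\<Sum>m=1..k. X m m) * (Emat k k i j - Emat (k+1) (k+1) i j))"
  have Emat_sl: "Emat a b \<in> sl n" if "a \<in> R" "b \<in> R - {a}" for a b
    using that by (intro Emat_in_sl) (auto simp: R_def)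
  have row_sl: "(\<lambda>i j. \<Sum>b\<in>R-{a}. X a b * Emat a b i j) \<in> sl n" if "a \<in> R" for a
    using that by (intro sl_sum sl_smult Emat_sl)
  have B_sl: "B \<in> sl n" unfolding B_def by (intro sl_sum sl_smult Emat_diag_diff_in_sl) auto
  have A_sl: "A \<in> sl n" unfolding A_def by (intro sl_sum row_sl)
  have "X = (\<lambda>i j. A i j + B i j)"
    using sl_eq_Emat_combination[OF X] unfolding A_def B_def R_def .
  hence "\<phi> X = \<phi> A + \<phi> B"
    using lin_add[OF A_sl B_sl] by simp
  also have "\<phi> A = (\<Sum>a\<in>R. \<phi> (\<lambda>i j. \<Sum>b\<in>R-{a}. X a b * Emat a b i j))"
    unfolding A_def by (rule additive_on_sl_sum[OF lin_add row_sl])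
  also have "\<dots> = (\<Sum>a\<in>R. \<Sum>b\<in>R-{a}. \<phi> (\<lambda>i j. X a b * Emat a b i j))"
  proof (rule sum.cong[OF refl])
    fix a assume "a \<in> R"
    have terms_sl: "(\<lambda>i j. X a b * Emat a b i j) \<in> sl n" if "b \<in> R - {a}" for b
      using \<open>a \<in> R\<close> that by (intro sl_smult Emat_sl)
    show "\<phi> (\<lambda>i j. \<Sum>b\<in>R-{a}. X a b * Emat a b i j) = (\<Sum>b\<in>R-{a}. \<phi> (\<lambda>i j. X a b * Emat a b i j))"
      by (rule additive_on_sl_sum[OF lin_add terms_sl])
  qed
  also have "\<dots> = (\<Sum>a\<in>R. \<Sum>b\<in>R-{a}. mconst (X a b) * \<phi> (Emat a b))"
    by (intro sum.cong refl lin_smult) (blast intro: Emat_sl)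
  also have "\<dots> = (\<Sum>b\<in>R-{1}. mconst (X 1 b) * pcol b)"
  proof -
    have "(\<Sum>b\<in>R-{a}. mconst (X a b) * \<phi> (Emat a b)) =
        (if a = 1 then (\<Sum>b\<in>R-{1}. mconst (X 1 b) * pcol b) else 0)" if "a \<in> R" for a
    proof (cases "a = 1")
      case True
      have "\<phi> (Emat 1 b) = pcol b" if "b \<in> R - {1}" for b
        using that v3[of "b - 1"] by (auto simp: R_def pcol_def)
      thus ?thesis using True by simp
    next
      case False
      thus ?thesis using that v4 by (auto simp: R_def)
    qed
    thus ?thesis using fin by (simp add: R_def)
  qed
  also have "\<phi> B = mconst (X 1 1)"
  proof -
    have "\<phi> B = (\<Sum>k=1..n. \<phi> (\<lambda>i j. (\<Sum>m=1..k. X m m) * (Emat k k i j - Emat (k+1) (k+1) i j)))"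
      unfolding B_def by (intro additive_on_sl_sum[OF lin_add] sl_smult Emat_diag_diff_in_sl) auto
    also have "\<dots> = (\<Sum>k=1..n. mconst (\<Sum>m=1..k. X m m) * \<phi> (\<lambda>i j. Emat k k i j - Emat (k+1) (k+1) i j))"
      by (intro sum.cong refl lin_smult Emat_diag_diff_in_sl) auto
    also have "\<dots> = (\<Sum>k=1..n. if k = 1 then mconst (X 1 1) else 0)"
      using v1 v2 by (intro sum.cong refl) (auto simp: numeral_2_eq_2)
    finally show ?thesis using n by simp
  qed
  also have "(\<Sum>b\<in>R-{1}. mconst (X 1 b) * pcol b) + mconst (X 1 1) = phi1_form n X"
    unfolding phi1_form_def R_def[symmetric] using fin
    by (subst sum.remove[of R 1]) (auto simp: R_def pcol_def)
  finally show ?thesis .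
qed

section \<open>The deformation\<close>

lemma poisson_zero_right [simp]: "poisson n v 0 = 0"
  by (simp add: poisson_def)

lemma star_bracket_fps_linear:
  assumes "qdeg_le n 1 u0" "qdeg_le n 1 u1" "qdeg_le n 1 v0" "qdeg_le n 1 v1"
  shows "star_bracket_fps n (fps_const u0 + fps_X * fps_const u1) (fps_const v0 + fps_X * fps_const v1) =
    fps_const (poisson n u0 v0) + fps_X * fps_const (poisson n u0 v1 + poisson n u1 v0)
    + fps_X ^ 2 * fps_const (poisson n u1 v1)" (is "?lhs = ?rhs")
proof (rule fps_ext)
  fix k
  define coeff where "coeff w0 w1 i = (if i = 0 then w0 else if i = 1 then w1 else 0)"
    for w0 w1 :: mpoly and i :: nat
  have nth: "fps_nth (fps_const w0 + fps_X * fps_const w1) i = coeff w0 w1 i" for w0 w1 i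
    by (simp add: coeff_def fps_X_mult_nth)
  have "qdeg_le n 1 (coeff u0 u1 i)" "qdeg_le n 1 (coeff v0 v1 i)" for i
    using assms by (simp_all add: coeff_def qdeg_le_def)
  hence lhs: "fps_nth ?lhs k = (\<Sum>i\<le>k. poisson n (coeff u0 u1 i) (coeff v0 v1 (k - i)))"
    unfolding star_bracket_fps_def nth by (simp add: star_bracket_eq_poisson)
  have rhs: "fps_nth ?rhs k = (if k = 0 then poisson n u0 v0 else if k = 1 then poisson n u0 v1 + poisson n u1 v0
      else if k = 2 then poisson n u1 v1 else 0)"
    by (simp add: fps_X_mult_nth fps_X_power_mult_nth)
  consider "k = 0" | "k = 1" | "k = 2" | "k \<ge> 3" by linarith
  thus "fps_nth ?lhs k = fps_nth ?rhs k"
  proof cases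
    case 3
    have "{..k} = {0, 1, 2}" using 3 by auto
    thus ?thesis unfolding lhs rhs using 3 by (simp add: coeff_def)
  next
    case 4
    have "poisson n (coeff u0 u1 i) (coeff v0 v1 (k - i)) = 0" for i
      using 4 by (auto simp: coeff_def)
    thus ?thesis unfolding lhs rhs using 4 by simp
  qed (unfold lhs rhs, simp_all add: coeff_def)
qed

theorem proposition8p1:
  fixes n :: nat and \<phi>1 :: "cmat \<Rightarrow> mpoly" and a :: complex
  assumes n: "n \<ge> 1"
    and lin_add: "\<And>X Y. X \<in> sl n \<Longrightarrow> Y \<in> sl n \<Longrightarrow> \<phi>1 (\<lambda>i j. X i j + Y i j) = \<phi>1 X + \<phi>1 Y"
    and lin_smult: "\<And>c X. X \<in> sl n \<Longrightarrow> \<phi>1 (\<lambda>i j. c * X i j) = mconst c * \<phi>1 X"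
    and v1: "\<phi>1 (\<lambda>i j. Emat 1 1 i j - Emat 2 2 i j) = 1"
    and v2: "\<And>k. 2 \<le> k \<Longrightarrow> k \<le> n \<Longrightarrow> \<phi>1 (\<lambda>i j. Emat k k i j - Emat (k+1) (k+1) i j) = 0"
    and v3: "\<And>k. 1 \<le> k \<Longrightarrow> k \<le> n \<Longrightarrow> \<phi>1 (Emat 1 (k+1)) = pvar k"
    and v4: "\<And>i j. 2 \<le> i \<Longrightarrow> i \<le> n+1 \<Longrightarrow> 1 \<le> j \<Longrightarrow> j \<le> n+1 \<Longrightarrow> j \<noteq> i \<Longrightarrow> \<phi>1 (Emat i j) = 0"
  shows "\<forall>X\<in>sl n. \<forall>Y\<in>sl n.
           Phi n \<phi>1 a (commutator n X Y) = star_bracket_fps n (Phi n \<phi>1 a X) (Phi n \<phi>1 a Y)"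
proof (intro ballI)
  fix X Y assume X: "X \<in> sl n" and Y: "Y \<in> sl n"
  have "\<phi>1 Z = phi1_form n Z" if "Z \<in> sl n" for Z
    using n lin_add lin_smult v1 v2 v3 v4 that by (rule phi1_eq_phi1_form)
  hence Phi_eq: "Phi n \<phi>1 a Z = fps_const (tilde n Z) + fps_X * fps_const (mconst a * phi1_form n Z)"
    if "Z \<in> sl n" for Z
    using that unfolding Phi_def by simp
  let ?\<phi>X = "mconst a * phi1_form n X" and ?\<phi>Y = "mconst a * phi1_form n Y"
  have "star_bracket_fps n (Phi n \<phi>1 a X) (Phi n \<phi>1 a Y) =
      fps_const (poisson n (tilde n X) (tilde n Y))
      + fps_X * fps_const (poisson n (tilde n X) ?\<phi>Y + poisson n ?\<phi>X (tilde n Y))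
      + fps_X ^ 2 * fps_const (poisson n ?\<phi>X ?\<phi>Y)"
    unfolding Phi_eq[OF X] Phi_eq[OF Y]
    by (rule star_bracket_fps_linear) (intro qdeg_le_tilde qdeg_le_smult qdeg_le_phi1_form)+
  also have "poisson n (tilde n X) ?\<phi>Y + poisson n ?\<phi>X (tilde n Y) = mconst a * phi1_form n (commutator n X Y)"
    unfolding poisson_smult_left poisson_smult_right distrib_left[symmetric] poisson_tilde_phi1_form ..
  also have "poisson n ?\<phi>X ?\<phi>Y = 0"
    by (simp add: poisson_smult_left poisson_smult_right poisson_phi1_form_phi1_form)
  finally show "Phi n \<phi>1 a (commutator n X Y) = star_bracket_fps n (Phi n \<phi>1 a X) (Phi n \<phi>1 a Y)"
    by (simp add: Phi_eq[OF commutator_in_sl[OF X Y]] poisson_tilde_tilde)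
qed

end
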